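(* Let $G = K(n_1,n_2,\ldots,n_p)$ be a complete multipartite graph, where $p \ge 2$ and $0\le n_1\le n_2\le\cdots\le n_p$, and let $N=n_1+n_2+\cdots+n_p$. Then: (a) if $2n_p \le N$, the detour sequence of $G$ is $(N)_N$; (b) if $2n_p > N$, the detour sequence of $G$ is $(2(N-n_p))_{N-n_p},\ (2(N-n_p)+1)_{n_p}$.
   Context: All graphs are finite and simple. $K(n_1,\ldots,n_p)$ denotes the complete multipartite graph whose vertex set is partitioned into independent sets $V_1,\ldots,V_p$ with $|V_i|=n_i$, two vertices being adjacent if and only if they lie in different parts. The order of a path is its number of vertices. For a vertex $v$, $\tau(v)$ is the order of a longest path having $v$ as an endvertex; the detour sequence is the nondecreasing sequence of the values $\tau(v)$ over all vertices. The notation $(n)_k$ denotes the integer $n$ repeated $k$ times consecutively. *)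

theory Defs
  imports Main "HOL-Library.Multiset"
begin

(* A simple graph is given by a finite vertex set V and a symmetric irreflexive
   adjacency relation E. *)
definition is_path :: "'a set \<Rightarrow> ('a \<Rightarrow> 'a \<Rightarrow> bool) \<Rightarrow> 'a list \<Rightarrow> bool" where
  "is_path V E ps \<longleftrightarrow> ps \<noteq> [] \<and> set ps \<subseteq> V \<and> distinct ps \<and>
     (\<forall>i. Suc i < length ps \<longrightarrow> E (ps ! i) (ps ! Suc i))"

definition tau :: "'a set \<Rightarrow> ('a \<Rightarrow> 'a \<Rightarrow> bool) \<Rightarrow> 'a \<Rightarrow> nat" where
  "tau V E v = Max {length ps | ps. is_path V E ps \<and> (hd ps = v \<or> last ps = v)}"

definition detour_seq :: "'a set \<Rightarrow> ('a \<Rightarrow> 'a \<Rightarrow> bool) \<Rightarrow> nat list" where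
  "detour_seq V E = sorted_list_of_multiset (image_mset (tau V E) (mset_set V))"

(* Complete multipartite graph K(n 0, ..., n (p-1)): part i is {(i,j). j < n i} *)
definition cmp_vertices :: "nat \<Rightarrow> (nat \<Rightarrow> nat) \<Rightarrow> (nat \<times> nat) set" where
  "cmp_vertices p n = {(i, j). i < p \<and> j < n i}"

definition cmp_adj :: "nat \<times> nat \<Rightarrow> nat \<times> nat \<Rightarrow> bool" where
  "cmp_adj u v \<longleftrightarrow> fst u \<noteq> fst v"

end

theory Submission
  imports Defs
begin

(* In a complete multipartite graph on a vertex set W, a Hamiltonian path starting at v exists
   as soon as every part has at most |W|/2 vertices, the part of v being allowed (|W| + 1)/2:
   build it greedily, stepping into a part that is tight (exactly half of W) whenever there is
   one, which keeps the remaining vertices balanced. If 2 n_p <= N this gives every vertex a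
   Hamiltonian path. Otherwise the largest part P is independent, so a path alternates at best
   and has at most 2 |V - P| vertices, plus one if it starts in P; a Hamiltonian path through
   V - P and just enough vertices of P attains this bound. *)

lemma successively_iff_nth:
  "successively P xs \<longleftrightarrow> (\<forall>i. Suc i < length xs \<longrightarrow> P (xs ! i) (xs ! Suc i))"
proof (induction P xs rule: successively.induct)
  case (3 P x y xs)
  then show ?case by (auto simp: nth_Cons split: nat.splits)
qed auto

lemma is_path_iff:
  "is_path V E ps \<longleftrightarrow> ps \<noteq> [] \<and> set ps \<subseteq> V \<and> distinct ps \<and> successively E ps"
  by (simp add: is_path_def successively_iff_nth)

lemma is_path_Cons:
  assumes "ps \<noteq> []"
  shows "is_path V E (v # ps) \<longleftrightarrow> v \<in> V \<and> v \<notin> set ps \<and> E v (hd ps) \<and> is_path V E ps"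
  using assms by (auto simp: is_path_iff successively_Cons)

lemma is_path_rev:
  assumes "\<And>u w. E u w \<Longrightarrow> E w u" and "is_path V E ps"
  shows "is_path V E (rev ps)"
  using assms by (auto simp: is_path_iff elim: successively_mono)

lemma is_path_mono: "is_path W E ps \<Longrightarrow> W \<subseteq> V \<Longrightarrow> is_path V E ps"
  by (auto simp: is_path_def)

lemma length_path_le_card: "is_path V E ps \<Longrightarrow> finite V \<Longrightarrow> length ps \<le> card V"
  unfolding is_path_def by (metis card_mono distinct_card)

lemma tau_eqI:
  assumes sym: "\<And>u w. E u w \<Longrightarrow> E w u"
    and witness: "is_path V E ps" "hd ps = v" "length ps = L"
    and bound: "\<And>ps. is_path V E ps \<Longrightarrow> hd ps = v \<Longrightarrow> length ps \<le> L"
  shows "tau V E v = L"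
proof -
  let ?S = "{length ps | ps. is_path V E ps \<and> (hd ps = v \<or> last ps = v)}"
  have le: "l \<le> L" if "l \<in> ?S" for l
  proof -
    obtain ps where ps: "l = length ps" "is_path V E ps" "hd ps = v \<or> last ps = v"
      using \<open>l \<in> ?S\<close> by blast
    then have "hd ps = v \<or> hd (rev ps) = v"
      by (auto simp: hd_rev is_path_def)
    then show ?thesis
      using bound[OF ps(2)] bound[OF is_path_rev[OF sym ps(2)]] ps(1) by auto
  qed
  then have "finite ?S"
    by (meson finite_atMost finite_subset atMost_iff subsetI)
  moreover have "L \<in> ?S"
    using witness by blast
  ultimately show ?thesis
    unfolding tau_def using le by (intro Max_eqI) auto
qed

lemma length_filter_le_if_not_successive:
  "successively (\<lambda>x y. \<not> (Q x \<and> Q y)) xs \<Longrightarrow>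
   length (filter Q xs) \<le> length (filter (\<lambda>x. \<not> Q x) xs) + of_bool (Q (hd xs))"
  by (induction "\<lambda>x y. \<not> (Q x \<and> Q y)" xs rule: successively.induct) auto

definition part :: "('a \<times> 'b) set \<Rightarrow> 'a \<Rightarrow> ('a \<times> 'b) set" where
  "part V k = {u \<in> V. fst u = k}"

lemma finite_part [simp]: "finite V \<Longrightarrow> finite (part V k)"
  by (simp add: part_def)

lemma cmp_adj_sym: "cmp_adj u w \<Longrightarrow> cmp_adj w u"
  by (simp add: cmp_adj_def)

lemma length_path_le_outside_part:
  assumes "is_path V cmp_adj ps" "finite V"
  shows "length ps \<le> 2 * card (V - part V q) + of_bool (fst (hd ps) = q)"
proof -
  let ?Q = "\<lambda>u. fst u = q"
  have "successively (\<lambda>x y. \<not> (?Q x \<and> ?Q y)) ps"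
    using assms(1) by (auto simp: is_path_iff cmp_adj_def elim: successively_mono)
  then have "length (filter ?Q ps) \<le> length (filter (\<lambda>u. \<not> ?Q u) ps) + of_bool (?Q (hd ps))"
    by (rule length_filter_le_if_not_successive)
  moreover have "length (filter (\<lambda>u. \<not> ?Q u) ps) \<le> card (V - part V q)"
  proof -
    have "length (filter (\<lambda>u. \<not> ?Q u) ps) = card ({u. \<not> ?Q u} \<inter> set ps)"
      using assms(1) by (simp add: is_path_def distinct_length_filter)
    also have "\<dots> \<le> card (V - part V q)"
      using assms by (intro card_mono) (auto simp: is_path_def part_def)
    finally show ?thesis .
  qed
  moreover have "length (filter ?Q ps) + length (filter (\<lambda>u. \<not> ?Q u) ps) = length ps"
    by (rule sum_length_filter_compl)
  ultimately show ?thesis by linarith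
qed

lemma card_part_Diff_singleton:
  assumes "finite V" "v \<in> V"
  shows "card (part (V - {v}) k) = card (part V k) - of_bool (fst v = k)"
proof -
  have "part (V - {v}) k = part V k - {v}"
    by (auto simp: part_def)
  then show ?thesis
    using assms by (simp add: card_Diff_singleton_if part_def)
qed

lemma card_two_parts_le:
  assumes "finite V" "v \<in> V" "k \<noteq> l" "k \<noteq> fst v" "l \<noteq> fst v"
  shows "card (part V k) + card (part V l) + 1 \<le> card V"
proof -
  have "card (part V k \<union> part V l) = card (part V k) + card (part V l)"
    using assms by (intro card_Un_disjoint) (auto simp: part_def)
  moreover have "card (insert v (part V k \<union> part V l)) = card (part V k \<union> part V l) + 1"
    using assms by (subst card_insert_disjoint) (auto simp: part_def)
  moreover have "card (insert v (part V k \<union> part V l)) \<le> card V"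
    using assms by (intro card_mono) (auto simp: part_def)
  ultimately show ?thesis by simp
qed

definition balanced_at :: "('a \<times> 'b) set \<Rightarrow> 'a \<times> 'b \<Rightarrow> bool" where
  "balanced_at V v \<longleftrightarrow> (\<forall>k. 2 * card (part V k) \<le> card V + of_bool (fst v = k))"

lemma balanced_at_Diff_singleton:
  assumes "finite V" "v \<in> V" "balanced_at V v" "fst w \<noteq> fst v"
    and not_tight: "\<And>k. k \<noteq> fst v \<Longrightarrow> k \<noteq> fst w \<Longrightarrow> 2 * card (part V k) \<noteq> card V"
  shows "balanced_at (V - {v}) w"
  unfolding balanced_at_def
proof
  fix k
  have bal: "2 * card (part V k) \<le> card V + of_bool (fst v = k)"
    using assms(3) by (simp add: balanced_at_def)
  have card_V: "card (V - {v}) = card V - 1"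
    using assms(1,2) by simp
  show "2 * card (part (V - {v}) k) \<le> card (V - {v}) + of_bool (fst w = k)"
  proof (cases "k = fst v")
    case True
    have "v \<in> part V k"
      using True assms(2) by (simp add: part_def)
    then have "card (part V k) \<ge> 1"
      using assms(1) by (metis One_nat_def Suc_leI card_gt_0_iff empty_iff finite_part)
    then show ?thesis
      using True bal assms(4) card_V by (simp add: card_part_Diff_singleton[OF assms(1,2)])
  next
    case False
    then show ?thesis
      using bal not_tight[of k] card_V by (auto simp: card_part_Diff_singleton[OF assms(1,2)])
  qed
qed

(* A part other than that of v holding exactly half of V must be entered next; by
   card_two_parts_le there is at most one such part. *)
lemma balanced_at_next:
  assumes "finite V" "v \<in> V" "balanced_at V v" "2 \<le> card V"
  obtains w where "w \<in> V" "fst w \<noteq> fst v" "balanced_at (V - {v}) w"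
proof (cases "\<exists>k. k \<noteq> fst v \<and> 2 * card (part V k) = card V")
  case True
  then obtain k where k: "k \<noteq> fst v" "2 * card (part V k) = card V"
    by blast
  then have "part V k \<noteq> {}"
    using assms(4) by auto
  then obtain w where w: "w \<in> V" "fst w = k"
    by (auto simp: part_def)
  have "2 * card (part V l) \<noteq> card V" if "l \<noteq> fst v" "l \<noteq> k" for l
    using card_two_parts_le[OF assms(1,2), of k l] k that by auto
  then have "balanced_at (V - {v}) w"
    using assms k w by (intro balanced_at_Diff_singleton) auto
  then show ?thesis
    using that w k by auto
next
  case False
  have "part V (fst v) \<noteq> V"
  proof
    assume "part V (fst v) = V"
    then show False
      using assms(3,4) by (auto simp: balanced_at_def dest: spec[of _ "fst v"])
  qed
  then obtain w where w: "w \<in> V" "fst w \<noteq> fst v"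
    by (auto simp: part_def)
  then have "balanced_at (V - {v}) w"
    using assms False by (intro balanced_at_Diff_singleton) auto
  then show ?thesis
    using that w by blast
qed

lemma hamiltonian_path_from:
  "finite V \<Longrightarrow> v \<in> V \<Longrightarrow> balanced_at V v \<Longrightarrow>
   \<exists>ps. is_path V cmp_adj ps \<and> hd ps = v \<and> length ps = card V"
proof (induction "card V" arbitrary: V v)
  case 0
  then show ?case by auto
next
  case (Suc m)
  show ?case
  proof (cases "m = 0")
    case True
    then have "V = {v}"
      using Suc by (metis One_nat_def card_1_singletonE singletonD)
    then show ?thesis
      by (intro exI[of _ "[v]"]) (simp add: is_path_def)
  next
    case False
    then obtain w where w: "w \<in> V" "fst w \<noteq> fst v" "balanced_at (V - {v}) w"
      using balanced_at_next[of V v] Suc.prems Suc.hyps(2) by auto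
    moreover have "card (V - {v}) = m"
      using Suc by simp
    ultimately obtain ps where ps: "is_path (V - {v}) cmp_adj ps" "hd ps = w" "length ps = m"
      using Suc.hyps(1)[of "V - {v}" w] Suc.prems(1) by fastforce
    then have "ps \<noteq> []"
      by (simp add: is_path_def)
    moreover have "v \<notin> set ps"
      using ps(1) by (auto simp: is_path_def)
    ultimately have "is_path V cmp_adj (v # ps)"
      using is_path_mono[OF ps(1)] ps(2) w(2) Suc.prems(2) by (auto simp: is_path_Cons cmp_adj_def)
    then show ?thesis
      using ps Suc.hyps(2) by (intro exI[of _ "v # ps"]) simp
  qed
qed

lemma tau_balanced:
  assumes "finite V" "v \<in> V" "balanced_at V v"
  shows "tau V cmp_adj v = card V"
proof -
  obtain ps where "is_path V cmp_adj ps" "hd ps = v" "length ps = card V"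
    using hamiltonian_path_from[OF assms] by blast
  then show ?thesis
    using assms(1) by (intro tau_eqI[OF cmp_adj_sym]) (auto intro: length_path_le_card)
qed

lemma balanced_at_trimmed:
  assumes "finite V" "v \<in> V" "T \<subseteq> part V q - {v}" "card T = card (V - part V q)"
  defines "W \<equiv> insert v ((V - part V q) \<union> T)"
  shows "card W = 2 * card (V - part V q) + of_bool (fst v = q)" and "balanced_at W v"
proof -
  let ?m = "card (V - part V q)" and ?P = "part V q"
  have fin: "finite (V - ?P)" "finite T"
    using assms(1,3) by (auto simp: part_def intro: finite_subset)
  have v_in_P: "v \<in> ?P \<longleftrightarrow> fst v = q"
    using assms(2) by (simp add: part_def)
  have "card W = card ((V - ?P) \<union> T) + of_bool (v \<notin> (V - ?P) \<union> T)"
    unfolding W_def using fin by (subst card_insert_if) auto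
  also have "card ((V - ?P) \<union> T) = 2 * ?m"
    using assms(3,4) fin by (subst card_Un_disjoint) auto
  also have "v \<notin> (V - ?P) \<union> T \<longleftrightarrow> fst v = q"
    using assms(2,3) v_in_P by auto
  finally show card_W: "card W = 2 * ?m + of_bool (fst v = q)" .
  show "balanced_at W v"
    unfolding balanced_at_def
  proof
    fix k
    show "2 * card (part W k) \<le> card W + of_bool (fst v = k)"
    proof (cases "k = q")
      case True
      have "part W k = T \<union> ({v} \<inter> ?P)"
        using assms(2,3) True by (auto simp: W_def part_def)
      then have "card (part W k) = ?m + of_bool (fst v = q)"
        using assms(3,4) fin v_in_P by (auto simp: card_insert_if)
      then show ?thesis
        using True card_W by simp
    next
      case False
      have "part W k \<subseteq> V - ?P"
        using assms(2,3) False by (auto simp: W_def part_def)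
      then have "card (part W k) \<le> ?m"
        using fin by (intro card_mono)
      then show ?thesis
        using card_W by simp
    qed
  qed
qed

lemma tau_unbalanced:
  assumes "finite V" "v \<in> V" and big_part: "card (V - part V q) < card (part V q)"
  shows "tau V cmp_adj v = 2 * card (V - part V q) + of_bool (fst v = q)"
proof -
  let ?m = "card (V - part V q)" and ?P = "part V q"
  have "?m \<le> card (?P - {v})"
    using big_part by (auto simp: card_Diff_singleton_if)
  then obtain T where T: "T \<subseteq> ?P - {v}" "card T = ?m"
    by (rule obtain_subset_with_card_n)
  define W where "W = insert v ((V - ?P) \<union> T)"
  have "W \<subseteq> V" "v \<in> W"
    using assms(2) T(1) by (auto simp: W_def part_def)
  moreover have "finite W"
    using \<open>W \<subseteq> V\<close> assms(1) by (rule finite_subset)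
  moreover note balanced_at_trimmed[OF assms(1,2) T, folded W_def]
  ultimately obtain ps
    where "is_path V cmp_adj ps" "hd ps = v" "length ps = 2 * ?m + of_bool (fst v = q)"
    using hamiltonian_path_from is_path_mono by metis
  then show ?thesis
    using assms(1)
    by (intro tau_eqI[OF cmp_adj_sym]) (auto dest: length_path_le_outside_part[where q = q])
qed

lemma detour_seq_two_valued:
  assumes "finite V" "V = A \<union> B" "A \<inter> B = {}"
    and "\<And>v. v \<in> A \<Longrightarrow> tau V E v = a" "\<And>v. v \<in> B \<Longrightarrow> tau V E v = b" "a \<le> b"
  shows "detour_seq V E = replicate (card A) a @ replicate (card B) b"
proof -
  have fin: "finite A" "finite B"
    using assms(1,2) by auto
  have "image_mset (tau V E) (mset_set V)
      = image_mset (tau V E) (mset_set A) + image_mset (tau V E) (mset_set B)"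
    using assms(2,3) fin by (simp add: mset_set_Union)
  also have "\<dots> = image_mset (\<lambda>_. a) (mset_set A) + image_mset (\<lambda>_. b) (mset_set B)"
    using assms(4,5) fin by (intro arg_cong2[where f = "(+)"] image_mset_cong) auto
  also have "\<dots> = mset (replicate (card A) a @ replicate (card B) b)"
    by (simp add: image_mset_const_eq)
  finally show ?thesis
    unfolding detour_seq_def using assms(6)
    by (simp only: sorted_list_of_multiset_mset) (simp add: sorted_sort_id sorted_append)
qed

lemma detour_seq_constant:
  assumes "finite V" "\<And>v. v \<in> V \<Longrightarrow> tau V E v = a"
  shows "detour_seq V E = replicate (card V) a"
  using detour_seq_two_valued[where A = V and B = "{}" and b = a] assms by simp

lemma cmp_vertices_eq_Sigma: "cmp_vertices p n = (SIGMA i:{..<p}. {..<n i})"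
  by (auto simp: cmp_vertices_def)

lemma finite_cmp_vertices: "finite (cmp_vertices p n)"
  by (simp add: cmp_vertices_eq_Sigma)

lemma card_cmp_vertices: "card (cmp_vertices p n) = (\<Sum>i<p. n i)"
  by (simp add: cmp_vertices_eq_Sigma)

lemma card_part_cmp_vertices: "card (part (cmp_vertices p n) k) = (if k < p then n k else 0)"
proof -
  have "part (cmp_vertices p n) k = (if k < p then {k} \<times> {..<n k} else {})"
    by (auto simp: part_def cmp_vertices_def)
  then show ?thesis
    by (simp add: card_cartesian_product)
qed

theorem theorem1p23:
  fixes p :: nat and n :: "nat \<Rightarrow> nat" and N :: nat
  assumes "p \<ge> 2"
    and "\<And>i k. i \<le> k \<Longrightarrow> k < p \<Longrightarrow> n i \<le> n k"
    and "N = (\<Sum>i<p. n i)"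
  shows "(2 * n (p - 1) \<le> N \<longrightarrow>
            detour_seq (cmp_vertices p n) cmp_adj = replicate N N)
       \<and> (2 * n (p - 1) > N \<longrightarrow>
            detour_seq (cmp_vertices p n) cmp_adj =
              replicate (N - n (p - 1)) (2 * (N - n (p - 1)))
              @ replicate (n (p - 1)) (2 * (N - n (p - 1)) + 1))"
proof -
  define V q where "V = cmp_vertices p n" and "q = p - 1"
  have fin: "finite V" and card_V: "card V = N"
    using assms(3) by (simp_all add: V_def finite_cmp_vertices card_cmp_vertices)
  have card_P: "card (part V q) = n q" and part_le: "card (part V k) \<le> n q" for k
    using assms(1,2) by (simp_all add: V_def q_def card_part_cmp_vertices)
  have "detour_seq V cmp_adj = replicate N N" if "2 * n q \<le> N"
  proof -
    have "2 * card (part V k) \<le> card V" for k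
      using part_le[of k] \<open>2 * n q \<le> N\<close> card_V by linarith
    then have "tau V cmp_adj v = N" if "v \<in> V" for v
      using tau_balanced[OF fin that] card_V by (simp add: balanced_at_def add_increasing2)
    then show ?thesis
      using detour_seq_constant[OF fin] card_V by metis
  qed
  moreover have "detour_seq V cmp_adj = replicate (N - n q) (2 * (N - n q))
                   @ replicate (n q) (2 * (N - n q) + 1)" if "N < 2 * n q"
  proof -
    have card_rest: "card (V - part V q) = N - n q"
      using fin card_V card_P by (simp add: card_Diff_subset part_def)
    have tau_V: "tau V cmp_adj v = 2 * (N - n q) + of_bool (fst v = q)" if "v \<in> V" for v
      using tau_unbalanced[OF fin that, where q = q] card_P card_rest \<open>N < 2 * n q\<close> by simp
    show ?thesis
      by (rule detour_seq_two_valued[where A = "V - part V q" and B = "part V q",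
            unfolded card_rest card_P])
        (use fin tau_V in \<open>auto simp: part_def\<close>)
  qed
  ultimately show ?thesis
    unfolding V_def q_def by blast
qed

end
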